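(* Fix matrices $A\in\mathbb{R}^{n_s\times n_s}$, $B\in\mathbb{R}^{n_s\times n_a}$, a vector $\mathbf b\in\mathbb{R}^{n_s}$ and an integer $q\ge 1$. Let $\mathcal{D}=\{(\mathbf s_k,\mathbf a_k,\mathbf s_{k+1})\}_{k=1}^{n}$ be a finite set of observed state transitions with $\mathbf s_k,\mathbf s_{k+1}\in\mathbb{R}^{n_s}$, $\mathbf a_k\in\mathbb{R}^{n_a}$. For a transition $(\mathbf s,\mathbf a,\mathbf s_+)$ define its noise $\mathbf w:=\mathbf s_+-(A\mathbf s+B\mathbf a+\mathbf b)$, and for any subset $\hat{\mathcal D}\subseteq\mathcal D$ let $\mathcal{W}(\hat{\mathcal D})$ be the set of noises of its transitions and $$\mathcal{S}_{\hat{\mathcal D}}:=\{\theta=(M,\mathbf m)\in\mathbb{R}^{q\times n_s}\times\mathbb{R}^q\ :\ M\mathbf w\le\mathbf m\ \ \forall\,\mathbf w\in\mathcal{W}(\hat{\mathcal D})\}.$$ Call $\bar{\mathcal D}\subseteq\mathcal D$ an optimal data compression if $\mathcal{S}_{\bar{\mathcal D}}=\mathcal{S}_{\mathcal D}$ and $|\bar{\mathcal D}|=\min\{|\hat{\mathcal D}|:\hat{\mathcal D}\subseteq\mathcal D,\ \mathcal{S}_{\hat{\mathcal D}}=\mathcal{S}_{\mathcal D}\}$. Let $\bar{\mathcal D}\subseteq\mathcal D$ consist of exactly one transition for each vertex (extreme point) of the convex hull $\mathrm{Conv}(\mathcal{W}(\mathcal D))$, namely a transition whose noise equals that vertex (so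 that $\mathcal W(\bar{\mathcal D})$ is the vertex representation of $\mathrm{Conv}(\mathcal W(\mathcal D))$). Then $\bar{\mathcal D}$ is an optimal data compression.
   Context: This formalizes the paper's statement that, for the polytopic dispersion-set parametrization $\hat{\mathbf S}_+(\mathbf s,\mathbf a,\theta)=\{A\mathbf s+B\mathbf a+\mathbf b+\mathbf w: M\mathbf w\le\mathbf m\}$ with fixed nominal model $(A,B,\mathbf b)$, the convex hull (in vertex representation) of the observed noise samples is an optimal data compression, i.e., a minimum-cardinality subset of the data defining the same set $\mathcal S$ of admissible parameters $\theta=(M,\mathbf m)$ (the "safe design constraint" set). *)

theory Defs
  imports "HOL-Analysis.Analysis"
begin

type_synonym ('ns,'na) transition = "(real^'ns) \<times> (real^'na) \<times> (real^'ns)"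

definition noise :: "real^'ns^'ns \<Rightarrow> real^'na^'ns \<Rightarrow> real^'ns \<Rightarrow> ('ns,'na) transition \<Rightarrow> real^'ns" where
  "noise A B b tr = (case tr of (s, a, s') \<Rightarrow> s' - (A *v s + B *v a + b))"

definition noises :: "real^'ns^'ns \<Rightarrow> real^'na^'ns \<Rightarrow> real^'ns \<Rightarrow> ('ns,'na) transition set \<Rightarrow> (real^'ns) set" where
  "noises A B b D = noise A B b ` D"

text \<open>Safe design constraint set S_D; the number q of rows is CARD('q); the inequality is componentwise.\<close>
definition safe_set :: "real^'ns^'ns \<Rightarrow> real^'na^'ns \<Rightarrow> real^'ns \<Rightarrow> ('ns,'na) transition set
    \<Rightarrow> ((real^'ns^'q) \<times> (real^'q)) set" where
  "safe_set A B b D = {(M, m). \<forall>w \<in> noises A B b D. M *v w \<le> m}"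

definition optimal_compression :: "real^'ns^'ns \<Rightarrow> real^'na^'ns \<Rightarrow> real^'ns
    \<Rightarrow> ('q::finite) itself \<Rightarrow> ('ns,'na) transition set \<Rightarrow> ('ns,'na) transition set \<Rightarrow> bool" where
  "optimal_compression A B b _ D Dbar \<longleftrightarrow>
     Dbar \<subseteq> D \<and>
     (safe_set A B b Dbar :: ((real^'ns^'q) \<times> (real^'q)) set) = safe_set A B b D \<and>
     card Dbar = Min {card Dh | Dh. Dh \<subseteq> D \<and>
        (safe_set A B b Dh :: ((real^'ns^'q) \<times> (real^'q)) set) = safe_set A B b D}"

end

theory Submission
  imports Defs
begin

text \<open>The safe set of a data set depends only on the convex hull of its noises: a polyhedron
  \<open>{w. M w \<le> m}\<close> is convex, so it contains a set iff it contains its convex hull, and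
  conversely a point outside the (compact) convex hull of finitely many noises is cut off by a
  separating hyperplane, which is a polyhedron with all \<open>q\<close> rows equal. Hence a subset of the
  data has the full safe set iff its noises have the same convex hull, iff they contain all
  vertices of \<open>Conv(W(D))\<close>; by Krein-Milman the vertices alone suffice.\<close>

definition enclosing_polyhedra :: "(real^'n) set \<Rightarrow> ((real^'n^'q) \<times> (real^'q)) set" where
  "enclosing_polyhedra W = {(M, m). \<forall>w \<in> W. M *v w \<le> m}"

lemma safe_set_eq_enclosing_polyhedra:
  "safe_set A B b D = enclosing_polyhedra (noises A B b D)"
  by (simp add: safe_set_def enclosing_polyhedra_def)

lemma convex_polyhedron:
  fixes M :: "real^'n^'q" and m :: "real^'q"
  shows "convex {w. M *v w \<le> m}"
proof -
  have "{w. M *v w \<le> m} = (\<Inter>i. {w. inner (M $ i) w \<le> m $ i})"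
    by (auto simp: less_eq_vec_def matrix_mult_dot)
  then show ?thesis
    by (simp add: convex_INT convex_halfspace_le)
qed

lemma enclosing_polyhedra_convex_hull:
  fixes W :: "(real^'n) set"
  shows "enclosing_polyhedra (convex hull W) = enclosing_polyhedra W"
proof -
  have "convex hull W \<subseteq> {w. M *v w \<le> m} \<longleftrightarrow> W \<subseteq> {w. M *v w \<le> m}"
    for M :: "real^'n^'q" and m
    using hull_subset[of W convex] hull_minimal[of W _ convex] convex_polyhedron by blast
  then show ?thesis
    by (auto simp: enclosing_polyhedra_def subset_eq)
qed

lemma subset_convex_hull_if_enclosing_polyhedra_subset:
  fixes V W :: "(real^'n) set"
  assumes "finite V"
    and "(enclosing_polyhedra V :: ((real^'n^'q::finite) \<times> (real^'q)) set) \<subseteq> enclosing_polyhedra W"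
  shows "W \<subseteq> convex hull V"
proof
  fix v assume "v \<in> W"
  show "v \<in> convex hull V"
  proof (rule ccontr)
    assume "v \<notin> convex hull V"
    then obtain a c where sep: "inner a v < c" "\<forall>x \<in> convex hull V. c < inner a x"
      using separating_hyperplane_closed_point[OF convex_convex_hull
          compact_imp_closed[OF finite_imp_compact_convex_hull[OF \<open>finite V\<close>]]] by blast
    define M :: "real^'n^'q" where "M = (\<chi> i. - a)"
    define m :: "real^'q" where "m = (\<chi> i. - c)"
    have "(M, m) \<in> enclosing_polyhedra V"
      using sep(2) hull_subset[of V convex]
      by (fastforce simp: enclosing_polyhedra_def M_def m_def matrix_mult_dot less_eq_vec_def)
    moreover have "\<not> M *v v \<le> m"
      using sep(1) by (simp add: M_def m_def matrix_mult_dot less_eq_vec_def)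
    then have "(M, m) \<notin> enclosing_polyhedra W"
      using \<open>v \<in> W\<close> by (auto simp: enclosing_polyhedra_def)
    ultimately show False
      using assms(2) by blast
  qed
qed

lemma enclosing_polyhedra_eq_iff_convex_hull_eq:
  fixes V W :: "(real^'n) set"
  assumes "finite V" "finite W"
  shows "(enclosing_polyhedra V :: ((real^'n^'q::finite) \<times> (real^'q)) set) = enclosing_polyhedra W
    \<longleftrightarrow> convex hull V = convex hull W"
proof
  assume eq: "(enclosing_polyhedra V :: ((real^'n^'q) \<times> (real^'q)) set) = enclosing_polyhedra W"
  have "W \<subseteq> convex hull V" "V \<subseteq> convex hull W"
    using subset_convex_hull_if_enclosing_polyhedra_subset[where 'q='q] assms eq by auto
  then show "convex hull V = convex hull W"
    by (intro antisym hull_minimal convex_convex_hull)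
next
  assume "convex hull V = convex hull W"
  then show "(enclosing_polyhedra V :: ((real^'n^'q) \<times> (real^'q)) set) = enclosing_polyhedra W"
    by (metis enclosing_polyhedra_convex_hull)
qed

lemma card_extreme_points_le_card:
  fixes f :: "'a \<Rightarrow> real^'n"
  assumes "finite T" "convex hull (f ` T) = convex hull W"
  shows "card {v. v extreme_point_of (convex hull W)} \<le> card T"
proof -
  have "{v. v extreme_point_of (convex hull W)} \<subseteq> f ` T"
    using assms(2) extreme_point_of_convex_hull[of _ "f ` T"] by auto
  then have "card {v. v extreme_point_of (convex hull W)} \<le> card (f ` T)"
    using assms(1) by (simp add: card_mono)
  also have "\<dots> \<le> card T"
    by (rule card_image_le[OF assms(1)])
  finally show ?thesis .
qed

lemma Min_card_subsets_eqI:
  assumes "finite D" "S \<subseteq> D" "P S"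
    and "\<And>T. T \<subseteq> D \<Longrightarrow> P T \<Longrightarrow> card S \<le> card T"
  shows "Min {card T | T. T \<subseteq> D \<and> P T} = card S"
proof (rule Min_eqI)
  have "{card T | T. T \<subseteq> D \<and> P T} \<subseteq> card ` Pow D"
    by auto
  then show "finite {card T | T. T \<subseteq> D \<and> P T}"
    using assms(1) finite_subset by blast
qed (use assms in auto)

theorem theorem1:
  fixes A :: "real^'ns^'ns" and B :: "real^'na^'ns" and b :: "real^'ns"
    and D Dbar :: "('ns,'na) transition set"
  assumes "finite D"
    and "Dbar \<subseteq> D"
    and "bij_betw (noise A B b) Dbar
           {v. v extreme_point_of (convex hull (noises A B b D))}"
  shows "optimal_compression A B b TYPE('q::finite) D Dbar"
proof -
  let ?safe = "\<lambda>D'. (safe_set A B b D' :: ((real^'ns^'q) \<times> (real^'q)) set)"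
  have finite_noises: "finite (noises A B b D')" if "D' \<subseteq> D" for D'
    using that assms(1) by (auto simp: noises_def intro: finite_subset)
  have full_safe_iff:
      "?safe D' = ?safe D \<longleftrightarrow> convex hull noises A B b D' = convex hull noises A B b D" if "D' \<subseteq> D" for D'
    unfolding safe_set_eq_enclosing_polyhedra
    by (rule enclosing_polyhedra_eq_iff_convex_hull_eq[OF finite_noises[OF that] finite_noises]) simp
  have vertices: "noises A B b Dbar = {v. v extreme_point_of (convex hull noises A B b D)}"
    using assms(3) by (simp add: noises_def bij_betw_def)
  have "?safe Dbar = ?safe D"
    using full_safe_iff[OF assms(2)] vertices Krein_Milman_polytope[OF finite_noises] by simp
  moreover have "card Dbar \<le> card Dh" if "Dh \<subseteq> D" "?safe Dh = ?safe D" for Dh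
    using card_extreme_points_le_card[of Dh "noise A B b" "noises A B b D"]
      full_safe_iff[OF that(1)] that bij_betw_same_card[OF assms(3)] finite_subset[OF _ assms(1)]
    by (simp add: noises_def)
  ultimately show ?thesis
    unfolding optimal_compression_def
    using Min_card_subsets_eqI[OF assms(1,2)] assms(2) by simp
qed

end
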